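(* Let $d\in\mathbb{N}$, $a<b$, $\alpha\in[0,1]$, $\rho=\mathrm{diag}(\rho_1,\dots,\rho_d)\in\mathbb{R}^{d\times d}$, and let $L:\mathbb{R}^d\times\mathbb{R}^d\to\mathbb{R}$, $(z,\dot z)\mapsto L(z,\dot z)$, be a $C^2$ function that is even in its second variable, i.e. $L(z,-\dot z)=L(z,\dot z)$. Consider the equations $$\text{(a)}\quad \frac{d}{dt}\Big(\frac{\partial L}{\partial\dot x}(x,\dot x)\Big)-\frac{\partial L}{\partial x}(x,\dot x)+\rho\,D^\alpha_-D^\alpha_-x=0,$$ $$\text{(b)}\quad \frac{d}{dt}\Big(\frac{\partial L}{\partial\dot y}(y,\dot y)\Big)-\frac{\partial L}{\partial y}(y,\dot y)+\rho\,D^\alpha_+D^\alpha_+y=0,$$ for smooth curves $x,y:[a,b]\to\mathbb{R}^d$. If $x$ is a smooth curve and $y(t):=x(a+b-t)$ (so that $y(a)=x(b)$, $y(b)=x(a)$), then equation (b) for $y$ is equation (a) for $x$ in reversed time $\tilde t=a+b-t$: for every $t\in[a,b]$ the left-hand side of (b) evaluated along $y$ at time $t$ equals the left-hand side of (a) evaluated along $x$ at time $\tilde t=a+b-t$. In particular $y$ solves (b) on $[a,b]$ if and only if $x$ solves (a) on $[a,b]$.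
   Context: For $f:[a,b]\to\mathbb{R}$ (componentwise for vector-valued functions), $D^\alpha_-f(t)=\frac{1}{\Gamma(1-\alpha)}\frac{d}{dt}\int_a^t(t-\tau)^{-\alpha}f(\tau)\,d\tau$ and $D^\alpha_+f(t)=-\frac{1}{\Gamma(1-\alpha)}\frac{d}{dt}\int_t^b(\tau-t)^{-\alpha}f(\tau)\,d\tau$ (Riemann–Liouville fractional derivatives); $D^\alpha_\pm D^\alpha_\pm$ denotes the composition. These equations are the restricted fractional Euler–Lagrange equations for the Lagrangian $L(x,\dot x)+L(y,\dot y)-D^\alpha_-x\,\rho\,D^\alpha_+y$. *)

theory Defs
  imports "HOL-Analysis.Analysis"
begin

definition C2_fun :: "('a::euclidean_space \<Rightarrow> real) \<Rightarrow> bool" where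
  "C2_fun f \<longleftrightarrow> (\<exists>(f' :: 'a \<Rightarrow> ('a \<Rightarrow>\<^sub>L real)) (f'' :: 'a \<Rightarrow> ('a \<Rightarrow>\<^sub>L ('a \<Rightarrow>\<^sub>L real))).
      (\<forall>p. (f has_derivative blinfun_apply (f' p)) (at p)) \<and>
      (\<forall>p. (f' has_derivative blinfun_apply (f'' p)) (at p)) \<and>
      continuous_on UNIV f'')"

definition smooth_curve_on :: "real set \<Rightarrow> (real \<Rightarrow> 'a::real_normed_vector) \<Rightarrow> bool" where
  "smooth_curve_on S x \<longleftrightarrow> (\<exists>D. D 0 = x \<and>
      (\<forall>k. \<forall>t\<in>S. (D k has_vector_derivative D (Suc k) t) (at t within S)))"

definition ddt :: "real set \<Rightarrow> (real \<Rightarrow> 'a::real_normed_vector) \<Rightarrow> real \<Rightarrow> 'a" where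
  "ddt S f t = (if f differentiable (at t within S) then vector_derivative f (at t within S) else 0)"

definition partial_z :: "(real^'d \<Rightarrow> real^'d \<Rightarrow> real) \<Rightarrow> real^'d \<Rightarrow> real^'d \<Rightarrow> real^'d" where
  "partial_z L z v = (\<chi> i. deriv (\<lambda>s. L (z + s *\<^sub>R axis i 1) v) 0)"

definition partial_v :: "(real^'d \<Rightarrow> real^'d \<Rightarrow> real) \<Rightarrow> real^'d \<Rightarrow> real^'d \<Rightarrow> real^'d" where
  "partial_v L z v = (\<chi> i. deriv (\<lambda>s. L z (v + s *\<^sub>R axis i 1)) 0)"

definition RL_left :: "real \<Rightarrow> real \<Rightarrow> real \<Rightarrow> (real \<Rightarrow> real) \<Rightarrow> real \<Rightarrow> real" where
  "RL_left a b \<alpha> f t = 1 / Gamma (1 - \<alpha>) *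
     ddt {a..b} (\<lambda>s. integral {a..s} (\<lambda>\<tau>. (s - \<tau>) powr (-\<alpha>) * f \<tau>)) t"

definition RL_right :: "real \<Rightarrow> real \<Rightarrow> real \<Rightarrow> (real \<Rightarrow> real) \<Rightarrow> real \<Rightarrow> real" where
  "RL_right a b \<alpha> f t = - (1 / Gamma (1 - \<alpha>)) *
     ddt {a..b} (\<lambda>s. integral {s..b} (\<lambda>\<tau>. (\<tau> - s) powr (-\<alpha>) * f \<tau>)) t"

definition RLv_left :: "real \<Rightarrow> real \<Rightarrow> real \<Rightarrow> (real \<Rightarrow> real^'d) \<Rightarrow> real \<Rightarrow> real^'d" where
  "RLv_left a b \<alpha> x t = (\<chi> i. RL_left a b \<alpha> (\<lambda>s. x s $ i) t)"

definition RLv_right :: "real \<Rightarrow> real \<Rightarrow> real \<Rightarrow> (real \<Rightarrow> real^'d) \<Rightarrow> real \<Rightarrow> real^'d" where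
  "RLv_right a b \<alpha> x t = (\<chi> i. RL_right a b \<alpha> (\<lambda>s. x s $ i) t)"

definition EL_a :: "(real^'d \<Rightarrow> real^'d \<Rightarrow> real) \<Rightarrow> real^'d^'d \<Rightarrow> real \<Rightarrow> real \<Rightarrow> real
     \<Rightarrow> (real \<Rightarrow> real^'d) \<Rightarrow> real \<Rightarrow> real^'d" where
  "EL_a L \<rho> \<alpha> a b x t =
     ddt {a..b} (\<lambda>s. partial_v L (x s) (ddt {a..b} x s)) t
     - partial_z L (x t) (ddt {a..b} x t)
     + \<rho> *v RLv_left a b \<alpha> (RLv_left a b \<alpha> x) t"

definition EL_b :: "(real^'d \<Rightarrow> real^'d \<Rightarrow> real) \<Rightarrow> real^'d^'d \<Rightarrow> real \<Rightarrow> real \<Rightarrow> real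
     \<Rightarrow> (real \<Rightarrow> real^'d) \<Rightarrow> real \<Rightarrow> real^'d" where
  "EL_b L \<rho> \<alpha> a b y t =
     ddt {a..b} (\<lambda>s. partial_v L (y s) (ddt {a..b} y s)) t
     - partial_z L (y t) (ddt {a..b} y t)
     + \<rho> *v RLv_right a b \<alpha> (RLv_right a b \<alpha> y) t"

end

theory Submission
  imports Defs
begin

text \<open>Reversing time, \<open>t \<mapsto> a + b - t\<close>, maps \<open>[a,b]\<close> onto itself and interchanges the
  left and right Riemann--Liouville integrals, so \<open>D\<^sup>\<alpha>\<^sub>+\<close> of the reversed curve is \<open>D\<^sup>\<alpha>\<^sub>-\<close>
  of the curve, reversed: the sign produced by the outer derivative is cancelled by the sign
  convention of \<open>D\<^sup>\<alpha>\<^sub>+\<close>. On the Lagrangian side the velocity changes sign; as \<open>L\<close> is even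
  in the velocity, its position gradient is unchanged and its velocity gradient changes sign,
  which again cancels against the sign of the outer time derivative. The identity holds at
  every point, the junk value \<open>0\<close> of \<open>ddt\<close> at non-differentiable points being preserved by
  reversal, so smoothness of \<open>x\<close>, the range of \<open>\<alpha>\<close> and diagonality of \<open>\<rho>\<close> are not needed.\<close>

lemma ddt_cong:
  assumes "t \<in> S" and "\<And>s. s \<in> S \<Longrightarrow> f s = g s"
  shows "ddt S f t = ddt S g t"
proof -
  have eq: "(f has_vector_derivative D) (at t within S) \<longleftrightarrow> (g has_vector_derivative D) (at t within S)"
    for D using has_vector_derivative_weaken[of _ _ t S S] assms by (metis order_refl)
  then have "f differentiable (at t within S) \<longleftrightarrow> g differentiable (at t within S)"
    by (metis vector_derivative_works differentiableI_vector)
  moreover have "vector_derivative f (at t within S) = vector_derivative g (at t within S)"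
    unfolding vector_derivative_def using eq by simp
  ultimately show ?thesis unfolding ddt_def by simp
qed

lemma has_vector_derivative_reflect_interval:
  fixes f :: "real \<Rightarrow> 'a::real_normed_vector"
  assumes "t \<in> {a..b}" and "(f has_vector_derivative f') (at (a + b - t) within {a..b})"
  shows "((\<lambda>s. f (a + b - s)) has_vector_derivative - f') (at t within {a..b})"
proof -
  have reflect: "((\<lambda>s. a + b - s) has_vector_derivative - 1) (at t within {a..b})"
    by (auto intro!: derivative_eq_intros simp: has_real_derivative_iff_has_vector_derivative[symmetric])
  have "(\<lambda>s. a + b - s) ` {a..b} = {a..b}"
    by (auto simp: image_iff intro!: bexI[where x="a + b - _"])
  with assms(2) have "(f has_vector_derivative f') (at ((\<lambda>s. a + b - s) t) within (\<lambda>s. a + b - s) ` {a..b})"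
    by simp
  from vector_diff_chain_within[OF reflect this] show ?thesis
    by (simp add: o_def)
qed

lemma ddt_reflect_interval:
  fixes f :: "real \<Rightarrow> 'a::euclidean_space"
  assumes "a < b" and "t \<in> {a..b}"
  shows "ddt {a..b} (\<lambda>s. f (a + b - s)) t = - ddt {a..b} f (a + b - t)"
proof (cases "f differentiable (at (a + b - t) within {a..b})")
  case True
  then have h: "((\<lambda>s. f (a + b - s)) has_vector_derivative - vector_derivative f (at (a + b - t) within {a..b}))
      (at t within {a..b})"
    by (intro has_vector_derivative_reflect_interval[OF assms(2)]) (simp add: vector_derivative_works[symmetric])
  with True show ?thesis
    unfolding ddt_def using vector_derivative_within_closed_interval[OF assms h] differentiableI_vector by fastforce
next
  case False
  have "\<not> (\<lambda>s. f (a + b - s)) differentiable (at t within {a..b})"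
  proof
    assume "(\<lambda>s. f (a + b - s)) differentiable (at t within {a..b})"
    then have "(f has_vector_derivative - vector_derivative (\<lambda>s. f (a + b - s)) (at t within {a..b}))
        (at (a + b - t) within {a..b})"
      using has_vector_derivative_reflect_interval[of "a + b - t" a b "\<lambda>s. f (a + b - s)"] assms(2)
      by (simp add: vector_derivative_works[symmetric])
    with False show False using differentiableI_vector by blast
  qed
  with False show ?thesis unfolding ddt_def by simp
qed

lemma ddt_uminus:
  fixes f :: "real \<Rightarrow> 'a::euclidean_space"
  assumes "a < b" and "t \<in> {a..b}"
  shows "ddt {a..b} (\<lambda>s. - f s) t = - ddt {a..b} f t"
proof (cases "f differentiable (at t within {a..b})")
  case True
  then have h: "((\<lambda>s. - f s) has_vector_derivative - vector_derivative f (at t within {a..b})) (at t within {a..b})"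
    by (intro has_vector_derivative_minus) (simp add: vector_derivative_works[symmetric])
  with True show ?thesis
    unfolding ddt_def using vector_derivative_within_closed_interval[OF assms h] differentiableI_vector by fastforce
next
  case False
  have "\<not> (\<lambda>s. - f s) differentiable (at t within {a..b})"
  proof
    assume "(\<lambda>s. - f s) differentiable (at t within {a..b})"
    then have "((\<lambda>s. - (- f s)) has_vector_derivative - vector_derivative (\<lambda>s. - f s) (at t within {a..b}))
        (at t within {a..b})"
      by (intro has_vector_derivative_minus) (simp add: vector_derivative_works[symmetric])
    with False show False using differentiableI_vector by fastforce
  qed
  with False show ?thesis unfolding ddt_def by simp
qed

lemma integral_RL_kernel_reflect:
  fixes g :: "real \<Rightarrow> real"
  shows "integral {s..b} (\<lambda>\<tau>. (\<tau> - s) powr (-\<alpha>) * g (a + b - \<tau>))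
       = integral {a..a + b - s} (\<lambda>u. (a + b - s - u) powr (-\<alpha>) * g u)"
proof -
  define h where "h u = (a + b - s - u) powr (-\<alpha>) * g u" for u
  have "integral {s..b} (\<lambda>\<tau>. (\<tau> - s) powr (-\<alpha>) * g (a + b - \<tau>))
      = integral {- (-s)..- (-b)} (\<lambda>\<tau>. h (- \<tau> + (a + b)))"
    by (simp add: h_def algebra_simps)
  also have "\<dots> = integral {-b..-s} (\<lambda>w. h (w + (a + b)))"
    using Henstock_Kurzweil_Integration.integral_reflect_real[of "-s" "-b" "\<lambda>w. h (w + (a + b))"] by simp
  also have "\<dots> = integral {a - (a + b)..(a + b - s) - (a + b)} (\<lambda>w. h (w + (a + b)))"
    by simp
  also have "\<dots> = integral {a..a + b - s} h"
    by (rule integral_shift_real_ivl)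
  finally show ?thesis by (simp add: h_def[abs_def])
qed

lemma RL_right_cong:
  assumes "t \<in> {a..b}" and "\<And>s. s \<in> {a..b} \<Longrightarrow> f s = g s"
  shows "RL_right a b \<alpha> f t = RL_right a b \<alpha> g t"
proof -
  have "ddt {a..b} (\<lambda>s. integral {s..b} (\<lambda>\<tau>. (\<tau> - s) powr (-\<alpha>) * f \<tau>)) t
      = ddt {a..b} (\<lambda>s. integral {s..b} (\<lambda>\<tau>. (\<tau> - s) powr (-\<alpha>) * g \<tau>)) t"
    by (rule ddt_cong[OF assms(1)], rule integral_cong) (auto simp: assms(2))
  then show ?thesis unfolding RL_right_def by simp
qed

lemma RL_right_reflect:
  assumes "a < b" and "t \<in> {a..b}"
  shows "RL_right a b \<alpha> (\<lambda>s. g (a + b - s)) t = RL_left a b \<alpha> g (a + b - t)"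
proof -
  define I where "I w = integral {a..w} (\<lambda>u. (w - u) powr (-\<alpha>) * g u)" for w
  have "ddt {a..b} (\<lambda>s. integral {s..b} (\<lambda>\<tau>. (\<tau> - s) powr (-\<alpha>) * g (a + b - \<tau>))) t
      = ddt {a..b} (\<lambda>s. I (a + b - s)) t"
    by (rule ddt_cong[OF assms(2)]) (simp add: I_def integral_RL_kernel_reflect)
  also have "\<dots> = - ddt {a..b} I (a + b - t)"
    by (rule ddt_reflect_interval[OF assms])
  finally show ?thesis unfolding RL_right_def RL_left_def I_def by simp
qed

lemma RLv_right_cong:
  assumes "t \<in> {a..b}" and "\<And>s. s \<in> {a..b} \<Longrightarrow> x s = y s"
  shows "RLv_right a b \<alpha> x t = RLv_right a b \<alpha> y t"
proof -
  have "RL_right a b \<alpha> (\<lambda>s. x s $ i) t = RL_right a b \<alpha> (\<lambda>s. y s $ i) t" for i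
    by (rule RL_right_cong[OF assms(1)]) (simp add: assms(2))
  then show ?thesis unfolding RLv_right_def by simp
qed

lemma RLv_right_reflect:
  assumes "a < b" and "t \<in> {a..b}"
  shows "RLv_right a b \<alpha> (\<lambda>s. x (a + b - s)) t = RLv_left a b \<alpha> x (a + b - t)"
proof -
  have "RL_right a b \<alpha> (\<lambda>s. x (a + b - s) $ i) t = RL_left a b \<alpha> (\<lambda>s. x s $ i) (a + b - t)" for i
    using RL_right_reflect[OF assms, where g="\<lambda>s. x s $ i"] by simp
  then show ?thesis unfolding RLv_right_def RLv_left_def by (simp add: vec_eq_iff)
qed

lemma RLv_right_RLv_right_reflect:
  assumes "a < b" and "t \<in> {a..b}"
  shows "RLv_right a b \<alpha> (RLv_right a b \<alpha> (\<lambda>s. x (a + b - s))) t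
       = RLv_left a b \<alpha> (RLv_left a b \<alpha> x) (a + b - t)"
proof -
  have "RLv_right a b \<alpha> (RLv_right a b \<alpha> (\<lambda>s. x (a + b - s))) t
      = RLv_right a b \<alpha> (\<lambda>s. RLv_left a b \<alpha> x (a + b - s)) t"
    using assms by (intro RLv_right_cong RLv_right_reflect) auto
  also have "\<dots> = RLv_left a b \<alpha> (RLv_left a b \<alpha> x) (a + b - t)"
    by (rule RLv_right_reflect[OF assms])
  finally show ?thesis .
qed

lemma C2_fun_differentiable: "C2_fun f \<Longrightarrow> f differentiable (at p)"
  unfolding C2_fun_def differentiable_def by blast

lemma C2_fun_differentiable_along_snd:
  fixes L :: "'a::euclidean_space \<Rightarrow> 'b::euclidean_space \<Rightarrow> real"
  assumes "C2_fun (\<lambda>p. L (fst p) (snd p))"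
  shows "(\<lambda>s. L z (w + s *\<^sub>R e)) differentiable (at s0)"
proof -
  have "(\<lambda>s. (z, w + s *\<^sub>R e)) differentiable (at s0)"
    by (intro differentiable_Pair differentiable_add differentiable_scaleR differentiable_ident
        differentiable_const)
  from differentiable_chain_at[OF this C2_fun_differentiable[OF assms]] show ?thesis
    by (simp add: o_def)
qed

lemma deriv_compose_uminus:
  fixes g :: "real \<Rightarrow> real"
  assumes "g differentiable (at (- x))"
  shows "deriv (\<lambda>s. g (- s)) x = - deriv g (- x)"
proof -
  have "(g has_real_derivative deriv g (- x)) (at (- x))"
    using assms by (simp add: DERIV_deriv_iff_real_differentiable)
  from DERIV_chain2[OF this DERIV_minus[OF DERIV_ident]] show ?thesis
    by (intro DERIV_imp_deriv) simp
qed

lemma partial_z_even: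
  assumes "\<forall>z v. L z (- v) = L z v"
  shows "partial_z L z (- v) = partial_z L z v"
  unfolding partial_z_def using assms by simp

lemma partial_v_odd:
  fixes L :: "real^'d \<Rightarrow> real^'d \<Rightarrow> real"
  assumes "C2_fun (\<lambda>p. L (fst p) (snd p))" and "\<forall>z v. L z (- v) = L z v"
  shows "partial_v L z (- v) = - partial_v L z v"
proof -
  have "(\<lambda>s. L z (- v + s *\<^sub>R axis i 1)) = (\<lambda>s. L z (v + (- s) *\<^sub>R axis i 1))" for i
  proof
    fix s
    have "L z (- v + s *\<^sub>R axis i 1) = L z (- (- v + s *\<^sub>R axis i 1))"
      using assms(2) by metis
    then show "L z (- v + s *\<^sub>R axis i 1) = L z (v + (- s) *\<^sub>R axis i 1)"
      by (simp add: algebra_simps)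
  qed
  moreover have "deriv (\<lambda>s. L z (v + (- s) *\<^sub>R axis i 1)) 0 = - deriv (\<lambda>s. L z (v + s *\<^sub>R axis i 1)) 0"
    for i using deriv_compose_uminus[OF C2_fun_differentiable_along_snd[OF assms(1)]] by simp
  ultimately show ?thesis
    unfolding partial_v_def by (simp add: vec_eq_iff)
qed

lemma ball_reflect_interval:
  "(\<forall>t\<in>{a..b}. P (a + b - t)) \<longleftrightarrow> (\<forall>t\<in>{a..b::real}. P t)"
proof (intro iffI ballI)
  fix t assume "\<forall>s\<in>{a..b}. P (a + b - s)" and "t \<in> {a..b}"
  then have "P (a + b - (a + b - t))"
    by (auto dest: bspec[where x="a + b - t"])
  then show "P t" by simp
qed auto

lemma EL_b_reflect:
  fixes L :: "real^'d \<Rightarrow> real^'d \<Rightarrow> real"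
  assumes "a < b" and "t \<in> {a..b}"
    and C2: "C2_fun (\<lambda>p. L (fst p) (snd p))" and even: "\<forall>z v. L z (- v) = L z v"
  shows "EL_b L \<rho> \<alpha> a b (\<lambda>s. x (a + b - s)) t = EL_a L \<rho> \<alpha> a b x (a + b - t)"
proof -
  define y where "y = (\<lambda>s. x (a + b - s))"
  have y_apply: "y s = x (a + b - s)" for s
    by (simp add: y_def)
  define P where "P = (\<lambda>s. partial_v L (x s) (ddt {a..b} x s))"
  have dy: "ddt {a..b} y s = - ddt {a..b} x (a + b - s)" if "s \<in> {a..b}" for s
    unfolding y_def by (rule ddt_reflect_interval[OF assms(1) that])
  have "ddt {a..b} (\<lambda>s. partial_v L (y s) (ddt {a..b} y s)) t = ddt {a..b} (\<lambda>s. - P (a + b - s)) t"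
    by (rule ddt_cong[OF assms(2)]) (simp add: dy y_apply P_def partial_v_odd[OF C2 even])
  also have "\<dots> = - ddt {a..b} (\<lambda>s. P (a + b - s)) t"
    by (rule ddt_uminus[OF assms(1,2)])
  also have "\<dots> = ddt {a..b} P (a + b - t)"
    by (simp add: ddt_reflect_interval[OF assms(1,2)])
  finally have lagrangian_v: "ddt {a..b} (\<lambda>s. partial_v L (y s) (ddt {a..b} y s)) t = ddt {a..b} P (a + b - t)" .
  have lagrangian_z: "partial_z L (y t) (ddt {a..b} y t) = partial_z L (x (a + b - t)) (ddt {a..b} x (a + b - t))"
    using dy[OF assms(2)] partial_z_even[OF even] by (simp add: y_apply)
  have fractional: "RLv_right a b \<alpha> (RLv_right a b \<alpha> y) t = RLv_left a b \<alpha> (RLv_left a b \<alpha> x) (a + b - t)"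
    unfolding y_def by (rule RLv_right_RLv_right_reflect[OF assms(1,2)])
  show ?thesis
    unfolding EL_a_def EL_b_def y_def[symmetric] lagrangian_v lagrangian_z fractional P_def ..
qed

theorem proposition3p8:
  fixes L :: "real^'d \<Rightarrow> real^'d \<Rightarrow> real" and \<rho> :: "real^'d^'d"
    and a b \<alpha> :: real and x :: "real \<Rightarrow> real^'d"
  assumes "a < b" and "0 \<le> \<alpha>" and "\<alpha> \<le> 1"
    and "\<forall>i j. i \<noteq> j \<longrightarrow> \<rho> $ i $ j = 0"
    and "C2_fun (\<lambda>p. L (fst p) (snd p))"
    and "\<forall>z v. L z (- v) = L z v"
    and "smooth_curve_on {a..b} x"
  shows "(\<forall>t\<in>{a..b}. EL_b L \<rho> \<alpha> a b (\<lambda>s. x (a + b - s)) t = EL_a L \<rho> \<alpha> a b x (a + b - t))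
       \<and> ((\<forall>t\<in>{a..b}. EL_b L \<rho> \<alpha> a b (\<lambda>s. x (a + b - s)) t = 0)
            \<longleftrightarrow> (\<forall>t\<in>{a..b}. EL_a L \<rho> \<alpha> a b x t = 0))"
proof -
  have reflect: "EL_b L \<rho> \<alpha> a b (\<lambda>s. x (a + b - s)) t = EL_a L \<rho> \<alpha> a b x (a + b - t)"
    if "t \<in> {a..b}" for t
    using EL_b_reflect[OF assms(1) that assms(5,6)] .
  then have "(\<forall>t\<in>{a..b}. EL_b L \<rho> \<alpha> a b (\<lambda>s. x (a + b - s)) t = 0)
      \<longleftrightarrow> (\<forall>t\<in>{a..b}. EL_a L \<rho> \<alpha> a b x (a + b - t) = 0)"
    by simp
  also have "\<dots> \<longleftrightarrow> (\<forall>t\<in>{a..b}. EL_a L \<rho> \<alpha> a b x t = 0)"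
    by (rule ball_reflect_interval)
  finally show ?thesis
    using reflect by blast
qed

end
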